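(* Let $n\geqslant 3$, let $S$ be a caterpillar species tree with canonical label vector $(s_1,\dots,s_n)$, and let $k_s,k_\ell\in\{1,\dots,n\}$ with $k_s<k_\ell$ and $k_\ell\neq 2$. Let $G$ be the caterpillar gene tree obtained from $S$ by forward incrementation on positions $k_s,\dots,k_\ell$, i.e. with canonical label vector $(g_1,\dots,g_n)$ given by $g_{k_s}=s_{k_\ell}$, $g_k=s_{k-1}$ for $k_s<k\leqslant k_\ell$, and $g_k=s_k$ for $k\notin\{k_s,\dots,k_\ell\}$. Then the roadblock set $B_{G,S}$ consists of a triangle of lattice points on and below the diagonal, i.e. $B_{G,S}=\{(i,j): a\leqslant j\leqslant i\leqslant b\}$ for some integers $a\leqslant b$.
   Context: All trees are binary, rooted, leaf-labeled. A caterpillar tree with $n$ leaves is one in which some internal node is descended from all other internal nodes. Its canonical label vector $(x_1,\dots,x_n)$ has $x_1,x_2$ the labels of the two leaves of the cherry (unique internal node with two descendant leaves) and, for $3\leqslant i\leqslant n$, $x_i$ the label of the leaf separated from the root by $n-i+1$ edges; vectors differing only by swapping $x_1,x_2$ describe the same tree. For caterpillars $G,S$ with canonical vectors $\mathbf g,\mathbf s$, let $\sigma(x)$ be the index of label $x$ in $\mathbf s$, $F(j)=\max\{\sigma(g_1),\dots,\sigma(g_{j+1})\}-1$ for $1\leqslant j\leqslant n-1$, and define the roadblock set $B_{G,S}=\{(i,j)\in\mathbb Z^2:1\leqslant j\leqslant i\leqslant n-1,\ i<F(j)\}$. *)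

theory Defs
  imports Main
begin

text \<open>A caterpillar tree on n leaves is represented by its canonical label vector
  x : {1..n} -> labels (injective); entries outside {1..n} are irrelevant.\<close>

definition canon_vec :: "nat \<Rightarrow> (nat \<Rightarrow> 'a) \<Rightarrow> bool" where
  "canon_vec n x \<longleftrightarrow> inj_on x {1..n}"

definition label_index :: "nat \<Rightarrow> (nat \<Rightarrow> 'a) \<Rightarrow> 'a \<Rightarrow> nat" where
  "label_index n s x = (THE i. i \<in> {1..n} \<and> s i = x)"

definition Fmax :: "nat \<Rightarrow> (nat \<Rightarrow> 'a) \<Rightarrow> (nat \<Rightarrow> 'a) \<Rightarrow> nat \<Rightarrow> int" where
  "Fmax n g s j = int (Max ((\<lambda>k. label_index n s (g k)) ` {1..j+1})) - 1"

definition roadblock :: "nat \<Rightarrow> (nat \<Rightarrow> 'a) \<Rightarrow> (nat \<Rightarrow> 'a) \<Rightarrow> (int \<times> int) set" where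
  "roadblock n g s = {(i, j). 1 \<le> j \<and> j \<le> i \<and> i \<le> int n - 1 \<and> i < Fmax n g s (nat j)}"

definition fwd_incr :: "(nat \<Rightarrow> 'a) \<Rightarrow> nat \<Rightarrow> nat \<Rightarrow> nat \<Rightarrow> 'a" where
  "fwd_incr s ks kl k =
     (if k = ks then s kl else if ks < k \<and> k \<le> kl then s (k - 1) else s k)"

end

theory Submission
  imports Defs
begin

text \<open>Reading the gene tree through the species tree, \<open>\<sigma>(g\<^sub>k)\<close> is the forward incrementation
  of the identity vector. Its prefix maxima are therefore \<open>j + 1\<close> while \<open>j + 1 < k\<^sub>s\<close> and
  \<open>max k\<^sub>\<ell> (j + 1)\<close> afterwards, so together with \<open>j \<le> i\<close> the roadblock condition \<open>i < F(j)\<close>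
  says exactly \<open>k\<^sub>s - 1 \<le> j\<close> and \<open>i \<le> k\<^sub>\<ell> - 2\<close>; the hypothesis \<open>k\<^sub>\<ell> \<noteq> 2\<close> makes this
  triangle nonempty.\<close>

lemma fwd_incr_comp: "fwd_incr (f \<circ> s) ks kl = f \<circ> fwd_incr s ks kl"
  by (auto simp: fwd_incr_def)

lemma fwd_incr_id_in_range:
  assumes "k \<in> {1..n}" "1 \<le> ks" "ks < kl" "kl \<le> n"
  shows "fwd_incr id ks kl k \<in> {1..n}"
  using assms by (auto simp: fwd_incr_def)

lemma label_index_canon_vec:
  assumes "canon_vec n s" "m \<in> {1..n}"
  shows "label_index n s (s m) = m"
  unfolding label_index_def
proof (rule the_equality)
  fix i assume "i \<in> {1..n} \<and> s i = s m"
  then show "i = m" using assms unfolding canon_vec_def inj_on_def by blast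
qed (use assms in simp)

lemma label_index_fwd_incr:
  assumes "canon_vec n s" "k \<in> {1..n}" "1 \<le> ks" "ks < kl" "kl \<le> n"
  shows "label_index n s (fwd_incr s ks kl k) = fwd_incr id ks kl k"
proof -
  have "fwd_incr s ks kl k = s (fwd_incr id ks kl k)"
    using fwd_incr_comp[of s id] by simp
  then show ?thesis
    using assms label_index_canon_vec fwd_incr_id_in_range by metis
qed

lemma Max_fwd_incr_id_prefix:
  assumes "1 \<le> ks" "ks < kl" "1 \<le> m"
  shows "Max (fwd_incr id ks kl ` {1..m}) = (if m < ks then m else max kl m)"
proof (rule Max_eqI)
  fix y assume "y \<in> fwd_incr id ks kl ` {1..m}"
  then show "y \<le> (if m < ks then m else max kl m)"
    by (auto simp: fwd_incr_def)
next
  have "m \<in> {1..m}" "m < ks \<or> kl < m \<Longrightarrow> fwd_incr id ks kl m = m"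
    using assms by (auto simp: fwd_incr_def)
  moreover have "ks \<in> {1..m}" "fwd_incr id ks kl ks = kl" if "ks \<le> m"
    using assms that by (auto simp: fwd_incr_def)
  ultimately show "(if m < ks then m else max kl m) \<in> fwd_incr id ks kl ` {1..m}"
    by (metis image_eqI linorder_not_le max.absorb1 max.absorb2 nless_le)
qed simp

lemma Fmax_fwd_incr:
  assumes "canon_vec n s" "1 \<le> ks" "ks < kl" "kl \<le> n" "j + 1 \<le> n"
  shows "Fmax n (fwd_incr s ks kl) s j = int (if j + 1 < ks then j + 1 else max kl (j + 1)) - 1"
proof -
  have "(\<lambda>k. label_index n s (fwd_incr s ks kl k)) ` {1..j+1} = fwd_incr id ks kl ` {1..j+1}"
    using assms by (intro image_cong) (auto simp: label_index_fwd_incr)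
  then show ?thesis
    using Max_fwd_incr_id_prefix[of ks kl "j + 1"] assms by (simp add: Fmax_def)
qed

lemma roadblock_fwd_incr:
  assumes "canon_vec n s" "1 \<le> ks" "ks < kl" "kl \<le> n"
  shows "roadblock n (fwd_incr s ks kl) s =
           {(i, j). max 1 (int ks - 1) \<le> j \<and> j \<le> i \<and> i \<le> int kl - 2}"
proof (intro set_eqI)
  fix x :: "int \<times> int"
  obtain i j where x: "x = (i, j)" by fastforce
  show "x \<in> roadblock n (fwd_incr s ks kl) s \<longleftrightarrow>
          x \<in> {(i, j). max 1 (int ks - 1) \<le> j \<and> j \<le> i \<and> i \<le> int kl - 2}"
    using assms Fmax_fwd_incr[OF assms, of "nat j"]
    by (auto simp: x roadblock_def split: if_splits)
qed

theorem proposition8: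
  fixes n ks kl :: nat and s :: "nat \<Rightarrow> 'a"
  assumes "n \<ge> 3"
    and "canon_vec n s"
    and "1 \<le> ks" and "ks < kl" and "kl \<le> n" and "kl \<noteq> 2"
  shows "\<exists>a b :: int. a \<le> b \<and>
           roadblock n (fwd_incr s ks kl) s = {(i, j). a \<le> j \<and> j \<le> i \<and> i \<le> b}"
proof (intro exI conjI)
  show "max 1 (int ks - 1) \<le> int kl - 2"
    using assms by auto
  show "roadblock n (fwd_incr s ks kl) s =
          {(i, j). max 1 (int ks - 1) \<le> j \<and> j \<le> i \<and> i \<le> int kl - 2}"
    using roadblock_fwd_incr assms by blast
qed

end
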